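(* Let $\psi\in\mathbf{\Psi}_n$, and $x:=(x_1,\ldots,x_n)\in X^n$ with $|\!|\!|x|\!|\!|_{\psi}=1$. Then $$\partial|\!|\!|\cdot|\!|\!|_\psi(x) = \Big\{(\xi_1 x^*_1,\ldots,\xi_n x^*_n)\mid x^*_i\in\partial\|\cdot\|(x_i)\ (i=1,\ldots,n),\ (\xi_1,\ldots,\xi_n)\in\partial|\!|\!|\cdot|\!|\!|_{\psi}(\nu)\Big\},$$ where $\nu:=(\|x_1\|,\ldots,\|x_n\|)\in\mathbb{R}^n$ and, in $\partial|\!|\!|\cdot|\!|\!|_{\psi}(\nu)$, $|\!|\!|\cdot|\!|\!|_\psi$ denotes the corresponding norm on $\mathbb{R}^n$.
   Context: Let $(X,\|\cdot\|)$ be a normed vector space, $n\ge2$. $\Omega_n:=\{t\in\mathbb{R}^n\mid t_i\ge0,\ \sum_i t_i=1\}$, $\Omega_n^\circ:=\{t\in\Omega_n\mid t_i<1\ \forall i\}$. $\mathbf{\Psi}_n$ is the class of convex continuous $\psi:\Omega_n\to\mathbb{R}$ with (B1) $\psi(\mathbf{e}_i)=1$ for all standard unit vectors $\mathbf{e}_i$ and (B2) $\psi(t)\ge(1-t_i)\psi\big(\frac{t_1}{1-t_i},\ldots,\frac{t_{i-1}}{1-t_i},0,\frac{t_{i+1}}{1-t_i},\ldots,\frac{t_n}{1-t_i}\big)$ for all $t\in\Omega_n^\circ$, $i=1,\ldots,n$. For $\psi\in\mathbf{\Psi}_n$, $|\!|\!|x|\!|\!|_\psi:=\big(\sum_{i}\|x_i\|\big)\,\psi\big(\frac{\|x_1\|}{\sum_{i}\|x_i\|},\ldots,\frac{\|x_n\|}{\sum_{i}\|x_i\|}\big)$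 for $x\ne0$, $|\!|\!|0|\!|\!|_\psi:=0$ (on $\mathbb{R}^n$ take $X=\mathbb{R}$ with absolute value). $\partial$ denotes the convex subdifferential; $(X^n)^*$ is identified with $(X^* )^n$. *)

theory Defs
  imports "HOL-Analysis.Analysis"
begin

text \<open>The index set {1..n} is rendered as a finite type 'n; X^n as 'n \<Rightarrow> 'a.\<close>

definition Omega :: "('n::finite \<Rightarrow> real) set" where
  "Omega = {t. (\<forall>i. 0 \<le> t i) \<and> (\<Sum>i\<in>UNIV. t i) = 1}"

definition Omega_int :: "('n::finite \<Rightarrow> real) set" where
  "Omega_int = {t \<in> Omega. \<forall>i. t i < 1}"

definition unit_vec :: "'n \<Rightarrow> ('n \<Rightarrow> real)" where
  "unit_vec i = (\<lambda>j. if j = i then 1 else 0)"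

definition Psi_class :: "(('n::finite \<Rightarrow> real) \<Rightarrow> real) set" where
  "Psi_class = {\<psi>. (\<forall>s\<in>Omega. \<forall>t\<in>Omega. \<forall>u::real. 0 \<le> u \<and> u \<le> 1 \<longrightarrow>
         \<psi> (\<lambda>i. u * s i + (1 - u) * t i) \<le> u * \<psi> s + (1 - u) * \<psi> t) \<and> continuous_on Omega \<psi>
     \<and> (\<forall>i. \<psi> (unit_vec i) = 1)
     \<and> (\<forall>t\<in>Omega_int. \<forall>i. \<psi> t \<ge> (1 - t i) *
           \<psi> (\<lambda>j. if j = i then 0 else t j / (1 - t i)))}"

text \<open>The \<psi>-direct-sum norm on X^n (for X = real, norm = abs gives the norm on R^n).\<close>
definition psi_norm :: "(('n::finite \<Rightarrow> real) \<Rightarrow> real) \<Rightarrow> ('n \<Rightarrow> 'a::real_normed_vector) \<Rightarrow> real" where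
  "psi_norm \<psi> x = (if x = (\<lambda>_. 0) then 0 else
     (\<Sum>i\<in>UNIV. norm (x i)) * \<psi> (\<lambda>i. norm (x i) / (\<Sum>j\<in>UNIV. norm (x j))))"

text \<open>Subdifferential of a function on X^n; (X^n)* identified with (X*)^n:
  a tuple g of continuous linear functionals acts by y \<mapsto> \<Sum>i. g i (y i).\<close>
definition subdiff :: "(('n::finite \<Rightarrow> 'a::real_normed_vector) \<Rightarrow> real) \<Rightarrow> ('n \<Rightarrow> 'a) \<Rightarrow> ('n \<Rightarrow> 'a \<Rightarrow> real) set" where
  "subdiff F x = {g. (\<forall>i. bounded_linear (g i)) \<and>
      (\<forall>y. F x + (\<Sum>i\<in>UNIV. g i (y i - x i)) \<le> F y)}"

definition norm_subdiff :: "'a::real_normed_vector \<Rightarrow> ('a \<Rightarrow> real) set" where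
  "norm_subdiff x = {f. bounded_linear f \<and> (\<forall>y. norm x + f (y - x) \<le> norm y)}"

text \<open>Subdifferential of a function on R^n; (R^n)* identified with R^n via the standard pairing.\<close>
definition subdiff_Rn :: "(('n::finite \<Rightarrow> real) \<Rightarrow> real) \<Rightarrow> ('n \<Rightarrow> real) \<Rightarrow> ('n \<Rightarrow> real) set" where
  "subdiff_Rn F t = {\<xi>. \<forall>s. F t + (\<Sum>i\<in>UNIV. \<xi> i * (s i - t i)) \<le> F s}"

end

theory Submission
  imports Defs
begin

(* A subgradient g = (g_1, ..., g_n) of the positively homogeneous function |||.|||_psi at x is
   exactly a tuple of bounded linear functionals with sum_i g_i(x_i) = |||x|||_psi and
   sum_i g_i(y_i) <= |||y|||_psi for all y.  Since |||y|||_psi depends only on the norms ||y_i||,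
   testing the inequality at y_i = t_i v_i, with unit vectors v_i on which g_i almost attains its
   norm, gives sum_i ||g_i|| t_i <= |||t|||_psi for t >= 0.  Together with
   g_i(x_i) <= ||g_i|| ||x_i|| this forces g_i(x_i) = ||g_i|| ||x_i|| for every i: hence
   xi_i = ||g_i|| is a subgradient of |||.|||_psi at nu, and g_i = xi_i x_i^* where x_i^* is
   g_i / xi_i, or a norming functional of x_i (Hahn-Banach) if xi_i = 0.  The reverse inclusion is
   a direct estimate. *)

section \<open>Hahn--Banach for the norm\<close>

text \<open>Linear functionals on subspaces dominated by the norm, represented by their graphs so that
  Zorn's lemma can be applied to inclusion.\<close>

definition dominated_graph :: "('a::real_normed_vector \<times> real) set \<Rightarrow> bool" where
  "dominated_graph H \<longleftrightarrow> (0, 0) \<in> H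
     \<and> (\<forall>u a v b. (u, a) \<in> H \<longrightarrow> (v, b) \<in> H \<longrightarrow> (u + v, a + b) \<in> H)
     \<and> (\<forall>c u a. (u, a) \<in> H \<longrightarrow> (c *\<^sub>R u, c * a) \<in> H)
     \<and> (\<forall>u a b. (u, a) \<in> H \<longrightarrow> (u, b) \<in> H \<longrightarrow> a = b)
     \<and> (\<forall>u a. (u, a) \<in> H \<longrightarrow> a \<le> norm u)"

lemma dominated_graph_zero: "dominated_graph H \<Longrightarrow> (0, 0) \<in> H"
  unfolding dominated_graph_def by blast

lemma dominated_graph_add: "dominated_graph H \<Longrightarrow> (u, a) \<in> H \<Longrightarrow> (v, b) \<in> H \<Longrightarrow> (u + v, a + b) \<in> H"
  unfolding dominated_graph_def by blast

lemma dominated_graph_scaleR: "dominated_graph H \<Longrightarrow> (u, a) \<in> H \<Longrightarrow> (c *\<^sub>R u, c * a) \<in> H"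
  unfolding dominated_graph_def by blast

lemma dominated_graph_unique: "dominated_graph H \<Longrightarrow> (u, a) \<in> H \<Longrightarrow> (u, b) \<in> H \<Longrightarrow> a = b"
  unfolding dominated_graph_def by blast

lemma dominated_graph_le_norm: "dominated_graph H \<Longrightarrow> (u, a) \<in> H \<Longrightarrow> a \<le> norm u"
  unfolding dominated_graph_def by blast

lemma dominated_graph_line: "dominated_graph (range (\<lambda>c. (c *\<^sub>R x, c * norm x)))"
  unfolding dominated_graph_def
proof (intro conjI allI impI)
  show "(0, 0) \<in> range (\<lambda>c. (c *\<^sub>R x, c * norm x))"
    by (rule image_eqI[where x = 0]) auto
next
  fix u a v b
  assume "(u, a) \<in> range (\<lambda>c. (c *\<^sub>R x, c * norm x))" "(v, b) \<in> range (\<lambda>c. (c *\<^sub>R x, c * norm x))"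
  then obtain c d where "u = c *\<^sub>R x" "a = c * norm x" "v = d *\<^sub>R x" "b = d * norm x" by auto
  then show "(u + v, a + b) \<in> range (\<lambda>c. (c *\<^sub>R x, c * norm x))"
    by (intro image_eqI[where x = "c + d"]) (auto simp: scaleR_add_left algebra_simps)
next
  fix c u a
  assume "(u, a) \<in> range (\<lambda>c. (c *\<^sub>R x, c * norm x))"
  then obtain d where "u = d *\<^sub>R x" "a = d * norm x" by auto
  then show "(c *\<^sub>R u, c * a) \<in> range (\<lambda>c. (c *\<^sub>R x, c * norm x))"
    by (intro image_eqI[where x = "c * d"]) auto
next
  fix u a b
  assume "(u, a) \<in> range (\<lambda>c. (c *\<^sub>R x, c * norm x))" "(u, b) \<in> range (\<lambda>c. (c *\<^sub>R x, c * norm x))"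
  then obtain c d where "u = c *\<^sub>R x" "a = c * norm x" "u = d *\<^sub>R x" "b = d * norm x" by blast
  then show "a = b"
    by (cases "x = 0") auto
next
  fix u a
  assume "(u, a) \<in> range (\<lambda>c. (c *\<^sub>R x, c * norm x))"
  then show "a \<le> norm u" by (auto intro!: mult_right_mono)
qed

lemma dominated_graph_Union_chain:
  assumes "C \<in> chains {H. dominated_graph H}" and "C \<noteq> {}"
  shows "dominated_graph (\<Union>C)"
proof -
  have dominated: "\<And>H. H \<in> C \<Longrightarrow> dominated_graph H"
    and chain: "\<And>H K. H \<in> C \<Longrightarrow> K \<in> C \<Longrightarrow> H \<subseteq> K \<or> K \<subseteq> H"
    using assms(1) unfolding chains_def chain_subset_def by auto
  have directed: "\<exists>K\<in>C. p \<in> K \<and> q \<in> K" if "p \<in> \<Union>C" "q \<in> \<Union>C" for p q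
    using that chain by (meson UnionE subsetD)
  obtain H0 where "H0 \<in> C" using assms(2) by auto
  show ?thesis
    unfolding dominated_graph_def
  proof (intro conjI allI impI)
    show "(0, 0) \<in> \<Union>C" using dominated_graph_zero dominated \<open>H0 \<in> C\<close> by blast
  next
    fix u a v b assume "(u, a) \<in> \<Union>C" "(v, b) \<in> \<Union>C"
    then obtain K where "K \<in> C" "(u, a) \<in> K" "(v, b) \<in> K" using directed by blast
    then show "(u + v, a + b) \<in> \<Union>C" using dominated dominated_graph_add by blast
  next
    fix c u a assume "(u, a) \<in> \<Union>C"
    then show "(c *\<^sub>R u, c * a) \<in> \<Union>C" using dominated dominated_graph_scaleR by blast
  next
    fix u a b assume "(u, a) \<in> \<Union>C" "(u, b) \<in> \<Union>C"
    then obtain K where "K \<in> C" "(u, a) \<in> K" "(u, b) \<in> K" using directed by blast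
    then show "a = b" using dominated dominated_graph_unique by blast
  next
    fix u a assume "(u, a) \<in> \<Union>C"
    then show "a \<le> norm u" using dominated dominated_graph_le_norm by blast
  qed
qed

text \<open>The constant c will be the value of the extended functional at the new vector z; it exists
  because b + a \<le> norm (u + v) \<le> norm (u - z) + norm (v + z).\<close>
lemma dominated_graph_extension_constant:
  assumes M: "dominated_graph M"
  obtains c where "\<And>u b. (u, b) \<in> M \<Longrightarrow> b - norm (u - z) \<le> c"
    and "\<And>v a. (v, a) \<in> M \<Longrightarrow> c \<le> norm (v + z) - a"
proof
  define S where "S = {b - norm (u - z) | u b. (u, b) \<in> M}"
  have separated: "b - norm (u - z) \<le> norm (v + z) - a" if "(u, b) \<in> M" "(v, a) \<in> M" for u b v a
  proof -
    have "b + a \<le> norm (u + v)"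
      using dominated_graph_le_norm[OF M dominated_graph_add[OF M that]] .
    also have "\<dots> \<le> norm (u - z) + norm (v + z)"
      using norm_triangle_ineq[of "u - z" "v + z"] by simp
    finally show ?thesis by simp
  qed
  have "S \<noteq> {}" using dominated_graph_zero[OF M] unfolding S_def by blast
  have "bdd_above S"
    unfolding S_def bdd_above_def using separated[OF _ dominated_graph_zero[OF M]] by auto
  show "b - norm (u - z) \<le> Sup S" if "(u, b) \<in> M" for u b
    using that \<open>bdd_above S\<close> by (auto simp: S_def intro!: cSup_upper)
  show "Sup S \<le> norm (v + z) - a" if "(v, a) \<in> M" for v a
    using that \<open>S \<noteq> {}\<close> separated by (auto simp: S_def intro!: cSup_least)
qed

lemma dominated_graph_extension_le_norm:
  assumes M: "dominated_graph M" and va: "(v, a) \<in> M"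
    and lower: "\<And>u b. (u, b) \<in> M \<Longrightarrow> b - norm (u - z) \<le> c"
    and upper: "\<And>v a. (v, a) \<in> M \<Longrightarrow> c \<le> norm (v + z) - a"
  shows "a + t * c \<le> norm (v + t *\<^sub>R z)"
proof (cases t "0::real" rule: linorder_cases)
  case less
  define s where "s = - t"
  have "s > 0" using less by (simp add: s_def)
  have "inverse s * a - norm (inverse s *\<^sub>R v - z) \<le> c"
    using lower[OF dominated_graph_scaleR[OF M va]] .
  then have "s * (inverse s * a - norm (inverse s *\<^sub>R v - z)) \<le> s * c"
    using \<open>s > 0\<close> by (intro mult_left_mono) auto
  moreover have "s * (inverse s * a) = a"
    using \<open>s > 0\<close> by (simp add: field_simps)
  ultimately have "a - s * norm (inverse s *\<^sub>R v - z) \<le> s * c"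
    by (simp add: right_diff_distrib)
  moreover have "s * norm (inverse s *\<^sub>R v - z) = norm (v + t *\<^sub>R z)"
  proof -
    have "v + t *\<^sub>R z = s *\<^sub>R (inverse s *\<^sub>R v - z)"
      using \<open>s > 0\<close> by (simp add: s_def algebra_simps)
    then show ?thesis using \<open>s > 0\<close> by simp
  qed
  ultimately show ?thesis by (simp add: s_def)
next
  case equal
  then show ?thesis using dominated_graph_le_norm[OF M va] by simp
next
  case greater
  have "c \<le> norm (inverse t *\<^sub>R v + z) - inverse t * a"
    using upper[OF dominated_graph_scaleR[OF M va]] .
  then have "t * c \<le> t * (norm (inverse t *\<^sub>R v + z) - inverse t * a)"
    using greater by (intro mult_left_mono) auto
  moreover have "t * (inverse t * a) = a"
    using greater by (simp add: field_simps)
  ultimately have "t * c \<le> t * norm (inverse t *\<^sub>R v + z) - a"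
    by (simp add: right_diff_distrib)
  moreover have "t * norm (inverse t *\<^sub>R v + z) = norm (v + t *\<^sub>R z)"
  proof -
    have "v + t *\<^sub>R z = t *\<^sub>R (inverse t *\<^sub>R v + z)"
      using greater by (simp add: algebra_simps)
    then show ?thesis using greater by simp
  qed
  ultimately show ?thesis by (simp add: algebra_simps)
qed

lemma dominated_graph_extension_coeff_unique:
  assumes M: "dominated_graph M" and z: "z \<notin> fst ` M"
    and u1: "(u1, a1) \<in> M" and u2: "(u2, a2) \<in> M" and eq: "u1 + t1 *\<^sub>R z = u2 + t2 *\<^sub>R z"
  shows "t1 = t2"
proof (rule ccontr)
  assume "t1 \<noteq> t2"
  have "(u2 + (-1) *\<^sub>R u1, a2 + (-1) * a1) \<in> M"
    using dominated_graph_add[OF M u2 dominated_graph_scaleR[OF M u1]] .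
  then have "(inverse (t1 - t2) *\<^sub>R (u2 - u1), inverse (t1 - t2) * (a2 - a1)) \<in> M"
    using dominated_graph_scaleR[OF M] by fastforce
  moreover have "u2 - u1 = (t1 - t2) *\<^sub>R z"
    using eq by (simp add: algebra_simps)
  ultimately have "z \<in> fst ` M"
    using \<open>t1 \<noteq> t2\<close> by force
  with z show False ..
qed

lemma dominated_graph_extension:
  assumes M: "dominated_graph M" and z: "z \<notin> fst ` M"
    and lower: "\<And>u b. (u, b) \<in> M \<Longrightarrow> b - norm (u - z) \<le> c"
    and upper: "\<And>v a. (v, a) \<in> M \<Longrightarrow> c \<le> norm (v + z) - a"
  shows "dominated_graph {(v + t *\<^sub>R z, a + t * c) | v a t. (v, a) \<in> M}"
    (is "dominated_graph ?M'")
  unfolding dominated_graph_def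
proof (intro conjI allI impI)
  show "(0, 0) \<in> ?M'"
    using dominated_graph_zero[OF M] by (intro CollectI exI[of _ 0] exI[of _ "0::real"]) auto
next
  fix u a v b assume "(u, a) \<in> ?M'" "(v, b) \<in> ?M'"
  then obtain u1 a1 t1 u2 a2 t2 where "u = u1 + t1 *\<^sub>R z" "a = a1 + t1 * c" "(u1, a1) \<in> M"
    and "v = u2 + t2 *\<^sub>R z" "b = a2 + t2 * c" "(u2, a2) \<in> M" by blast
  then show "(u + v, a + b) \<in> ?M'"
    using dominated_graph_add[OF M, of u1 a1 u2 a2]
    by (intro CollectI exI[of _ "u1 + u2"] exI[of _ "a1 + a2"] exI[of _ "t1 + t2"])
      (auto simp: algebra_simps)
next
  fix d u a assume "(u, a) \<in> ?M'"
  then obtain u1 a1 t1 where "u = u1 + t1 *\<^sub>R z" "a = a1 + t1 * c" "(u1, a1) \<in> M" by blast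
  then show "(d *\<^sub>R u, d * a) \<in> ?M'"
    using dominated_graph_scaleR[OF M, of u1 a1 d]
    by (intro CollectI exI[of _ "d *\<^sub>R u1"] exI[of _ "d * a1"] exI[of _ "d * t1"])
      (auto simp: algebra_simps)
next
  fix u a b assume "(u, a) \<in> ?M'" "(u, b) \<in> ?M'"
  then obtain u1 a1 t1 u2 a2 t2
    where u1: "u = u1 + t1 *\<^sub>R z" "a = a1 + t1 * c" "(u1, a1) \<in> M"
      and u2: "u = u2 + t2 *\<^sub>R z" "b = a2 + t2 * c" "(u2, a2) \<in> M" by blast
  have "t1 = t2"
    using dominated_graph_extension_coeff_unique[OF M z u1(3) u2(3)] u1(1) u2(1) by simp
  moreover from this have "u1 = u2"
    using u1(1) u2(1) by simp
  ultimately show "a = b"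
    using u1(2) u2 dominated_graph_unique[OF M u1(3)] by simp
next
  fix u a assume "(u, a) \<in> ?M'"
  then obtain v a' t where "u = v + t *\<^sub>R z" "a = a' + t * c" "(v, a') \<in> M" by blast
  then show "a \<le> norm u"
    using dominated_graph_extension_le_norm[OF M _ lower upper] by simp
qed

lemma maximal_dominated_graph_total:
  assumes M: "dominated_graph M" and maximal: "\<And>H. dominated_graph H \<Longrightarrow> M \<subseteq> H \<Longrightarrow> H = M"
  shows "\<exists>a. (z, a) \<in> M"
proof (rule ccontr)
  assume "\<nexists>a. (z, a) \<in> M"
  then have z_new: "z \<notin> fst ` M" by force
  obtain c where lower: "\<And>u b. (u, b) \<in> M \<Longrightarrow> b - norm (u - z) \<le> c"
    and upper: "\<And>v a. (v, a) \<in> M \<Longrightarrow> c \<le> norm (v + z) - a"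
    using dominated_graph_extension_constant[OF M] by blast
  let ?M' = "{(v + t *\<^sub>R z, a + t * c) | v a t. (v, a) \<in> M}"
  have "M \<subseteq> ?M'"
  proof
    fix p assume "p \<in> M"
    then show "p \<in> ?M'"
      by (intro CollectI exI[of _ "fst p"] exI[of _ "snd p"] exI[of _ "0::real"]) auto
  qed
  then have "?M' = M"
    using maximal[OF dominated_graph_extension[OF M z_new lower upper]] by blast
  moreover have "(z, c) \<in> ?M'"
    using dominated_graph_zero[OF M]
    by (intro CollectI exI[of _ 0] exI[of _ "0::real"] exI[of _ "1::real"]) auto
  ultimately have "z \<in> fst ` M"
    using rev_image_eqI[of "(z, c)" M z fst] by simp
  with z_new show False ..
qed

lemma total_dominated_graph_functional:
  fixes M :: "('a::real_normed_vector \<times> real) set"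
  assumes M: "dominated_graph M" and total: "\<And>v. \<exists>a. (v, a) \<in> M"
  obtains f :: "'a \<Rightarrow> real" where "bounded_linear f" and "\<And>v. (v, f v) \<in> M" and "\<And>v. f v \<le> norm v"
proof
  define f where "f v = (THE a. (v, a) \<in> M)" for v
  show graph: "(v, f v) \<in> M" for v
    unfolding f_def using total dominated_graph_unique[OF M] by (metis theI)
  have f_eq: "f v = a" if "(v, a) \<in> M" for v a
    using dominated_graph_unique[OF M graph that] .
  show le: "f v \<le> norm v" for v
    using dominated_graph_le_norm[OF M graph] .
  show "bounded_linear f"
  proof (rule bounded_linear_intro[where K = 1])
    show "f (u + v) = f u + f v" for u v
      using f_eq[OF dominated_graph_add[OF M graph graph]] .
    show "f (r *\<^sub>R v) = r *\<^sub>R f v" for r v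
      using f_eq[OF dominated_graph_scaleR[OF M graph]] by simp
    show "norm (f v) \<le> norm v * 1" for v
      using le[of v] le[of "- v"] f_eq[OF dominated_graph_scaleR[OF M graph, where c = "-1"]]
    by simp
  qed
qed

lemma norm_subdiff_iff:
  "f \<in> norm_subdiff x \<longleftrightarrow> bounded_linear f \<and> f x = norm x \<and> (\<forall>y. f y \<le> norm y)"
proof -
  have "(\<forall>y. norm x + f (y - x) \<le> norm y) \<longleftrightarrow> f x = norm x \<and> (\<forall>y. f y \<le> norm y)"
    if "linear f"
  proof
    assume sub: "\<forall>y. norm x + f (y - x) \<le> norm y"
    have "norm x + f (0 - x) \<le> norm 0" and "norm x + f (2 *\<^sub>R x - x) \<le> norm (2 *\<^sub>R x)"
      using sub[rule_format, of 0] sub[rule_format, of "2 *\<^sub>R x"] by auto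
    then have "f x = norm x"
      using linear_diff[OF that] linear_scale[OF that] by (simp add: linear_neg[OF that])
    moreover have "f y \<le> norm y" for y
      using sub[rule_format, of "x + y"] norm_triangle_ineq[of x y] by simp
    ultimately show "f x = norm x \<and> (\<forall>y. f y \<le> norm y)" by blast
  qed (simp add: linear_diff[OF that])
  then show ?thesis
    unfolding norm_subdiff_def using bounded_linear.linear by blast
qed

lemma norm_subdiff_abs_le:
  assumes "f \<in> norm_subdiff x"
  shows "\<bar>f y\<bar> \<le> norm y"
proof -
  have "bounded_linear f" and le: "\<And>y. f y \<le> norm y"
    using assms by (auto simp: norm_subdiff_iff)
  then show ?thesis
    using le[of y] le[of "- y"] linear_neg[OF bounded_linear.linear, of f y]
    by (simp add: abs_le_iff)
qed

lemma norm_subdiff_nonempty: "norm_subdiff x \<noteq> {}"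
proof -
  let ?A = "{H. dominated_graph H \<and> (x, norm x) \<in> H}"
  have "\<exists>U\<in>?A. \<forall>H\<in>C. H \<subseteq> U" if C: "C \<in> chains ?A" for C
  proof (cases "C = {}")
    case True
    have "(x, norm x) \<in> range (\<lambda>c. (c *\<^sub>R x, c * norm x))"
      by (rule image_eqI[where x = 1]) simp_all
    with True show ?thesis
      using dominated_graph_line[of x] by blast
  next
    case False
    then obtain H where "H \<in> C" by blast
    have "C \<in> chains {H. dominated_graph H}" and x: "\<forall>H\<in>C. (x, norm x) \<in> H"
      using C unfolding chains_def by auto
    then have "dominated_graph (\<Union>C)"
      using dominated_graph_Union_chain False by blast
    moreover have "(x, norm x) \<in> \<Union>C"
      using x \<open>H \<in> C\<close> by blast
    ultimately show ?thesis by blast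
  qed
  then have "\<exists>M\<in>?A. \<forall>H\<in>?A. M \<subseteq> H \<longrightarrow> H = M"
    by (intro Zorn_Lemma2) blast
  then obtain M where "M \<in> ?A" and maximal: "\<And>H. H \<in> ?A \<Longrightarrow> M \<subseteq> H \<Longrightarrow> H = M"
    by blast
  then have M: "dominated_graph M" and x: "(x, norm x) \<in> M" by auto
  have "\<exists>a. (v, a) \<in> M" for v
    using maximal_dominated_graph_total[OF M] maximal x by blast
  then obtain f where "bounded_linear f" and graph: "\<And>v. (v, f v) \<in> M" and "\<And>v. f v \<le> norm v"
    using total_dominated_graph_functional[OF M] by blast
  moreover have "f x = norm x"
    using dominated_graph_unique[OF M graph x] .
  ultimately have "f \<in> norm_subdiff x"
    by (simp add: norm_subdiff_iff)
  then show ?thesis by blast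
qed

section \<open>Subgradients of positively homogeneous functions\<close>

lemma subgradient_of_homogeneous_iff:
  fixes F :: "('n::finite \<Rightarrow> 'a::real_vector) \<Rightarrow> real" and L :: "'n \<Rightarrow> 'a \<Rightarrow> real"
  assumes hom: "\<And>c y. 0 \<le> c \<Longrightarrow> F (\<lambda>i. c *\<^sub>R y i) = c * F y"
    and lin: "\<And>i. linear (L i)"
  shows "(\<forall>y. F x + (\<Sum>i\<in>UNIV. L i (y i - x i)) \<le> F y) \<longleftrightarrow>
    (\<Sum>i\<in>UNIV. L i (x i)) = F x \<and> (\<forall>y. (\<Sum>i\<in>UNIV. L i (y i)) \<le> F y)"
proof -
  have diff: "(\<Sum>i\<in>UNIV. L i (y i - x i)) = (\<Sum>i\<in>UNIV. L i (y i)) - (\<Sum>i\<in>UNIV. L i (x i))" for y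
    by (simp add: linear_diff[OF lin] sum_subtractf)
  have scale: "(\<Sum>i\<in>UNIV. L i (c *\<^sub>R x i)) = c * (\<Sum>i\<in>UNIV. L i (x i))" for c
    by (simp add: linear_scale[OF lin] sum_distrib_left)
  show ?thesis
  proof
    assume sub: "\<forall>y. F x + (\<Sum>i\<in>UNIV. L i (y i - x i)) \<le> F y"
    have "F x + (0 - 1) * (\<Sum>i\<in>UNIV. L i (x i)) \<le> 0 * F x"
      and "F x + (2 - 1) * (\<Sum>i\<in>UNIV. L i (x i)) \<le> 2 * F x"
      using sub[rule_format, of "\<lambda>i. 0 *\<^sub>R x i"] sub[rule_format, of "\<lambda>i. 2 *\<^sub>R x i"]
      unfolding diff scale hom[OF order_refl] hom[of 2, simplified]
      by (simp_all add: left_diff_distrib)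
    then show "(\<Sum>i\<in>UNIV. L i (x i)) = F x \<and> (\<forall>y. (\<Sum>i\<in>UNIV. L i (y i)) \<le> F y)"
      using sub diff by fastforce
  qed (simp add: diff)
qed

section \<open>The subdifferential of the \<psi>-direct-sum norm\<close>

lemma psi_norm_norms:
  fixes y :: "'n::finite \<Rightarrow> 'a::real_normed_vector"
  shows "psi_norm \<psi> y = psi_norm \<psi> (\<lambda>i. norm (y i))"
proof -
  have "(\<lambda>i. norm (y i)) = (\<lambda>_. 0) \<longleftrightarrow> y = (\<lambda>_. 0)" by (auto simp: fun_eq_iff)
  then show ?thesis unfolding psi_norm_def by simp
qed

lemma psi_norm_scaleR:
  fixes y :: "'n::finite \<Rightarrow> 'a::real_normed_vector"
  assumes "0 \<le> c"
  shows "psi_norm \<psi> (\<lambda>i. c *\<^sub>R y i) = c * psi_norm \<psi> y"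
proof (cases "c = 0 \<or> y = (\<lambda>_. 0)")
  case True
  then show ?thesis unfolding psi_norm_def by (auto simp: fun_eq_iff)
next
  case False
  then have "0 < c" and "y \<noteq> (\<lambda>_. 0)" and "(\<lambda>i. c *\<^sub>R y i) \<noteq> (\<lambda>_. 0)"
    using assms by (auto simp: fun_eq_iff)
  moreover have "(\<Sum>i\<in>UNIV. norm (c *\<^sub>R y i)) = c * (\<Sum>i\<in>UNIV. norm (y i))"
    using \<open>0 < c\<close> by (simp add: sum_distrib_left)
  ultimately show ?thesis unfolding psi_norm_def by simp
qed

lemma subdiff_psi_norm_iff:
  "g \<in> subdiff (psi_norm \<psi>) x \<longleftrightarrow> (\<forall>i. bounded_linear (g i)) \<and>
    (\<Sum>i\<in>UNIV. g i (x i)) = psi_norm \<psi> x \<and> (\<forall>y. (\<Sum>i\<in>UNIV. g i (y i)) \<le> psi_norm \<psi> y)"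
proof -
  have "(\<forall>y. psi_norm \<psi> x + (\<Sum>i\<in>UNIV. g i (y i - x i)) \<le> psi_norm \<psi> y) \<longleftrightarrow>
      (\<Sum>i\<in>UNIV. g i (x i)) = psi_norm \<psi> x \<and> (\<forall>y. (\<Sum>i\<in>UNIV. g i (y i)) \<le> psi_norm \<psi> y)"
    if "\<forall>i. bounded_linear (g i)"
    by (rule subgradient_of_homogeneous_iff)
      (auto intro: psi_norm_scaleR bounded_linear.linear that[rule_format])
  then show ?thesis
    unfolding subdiff_def by blast
qed

lemma subdiff_Rn_psi_norm_iff:
  fixes \<xi> t :: "'n::finite \<Rightarrow> real"
  shows "\<xi> \<in> subdiff_Rn (psi_norm \<psi>) t \<longleftrightarrow>
    (\<Sum>i\<in>UNIV. \<xi> i * t i) = psi_norm \<psi> t \<and> (\<forall>s. (\<Sum>i\<in>UNIV. \<xi> i * s i) \<le> psi_norm \<psi> s)"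
proof -
  have "psi_norm \<psi> (\<lambda>i. c * s i) = c * psi_norm \<psi> s" if "0 \<le> c" for c and s :: "'n \<Rightarrow> real"
    using psi_norm_scaleR[OF that, of \<psi> s] by simp
  then show ?thesis
    unfolding subdiff_Rn_def mem_Collect_eq
    by (intro subgradient_of_homogeneous_iff[where L = "\<lambda>i r. \<xi> i * r", simplified])
      (simp_all add: bounded_linear.linear[OF bounded_linear_mult_right])
qed

lemma scaled_norm_subgradients_mem_subdiff_psi_norm:
  fixes x :: "'n::finite \<Rightarrow> 'a::real_normed_vector"
  assumes xs: "\<forall>i. xs i \<in> norm_subdiff (x i)"
    and \<xi>: "\<xi> \<in> subdiff_Rn (psi_norm \<psi>) (\<lambda>i. norm (x i))"
  shows "(\<lambda>i v. \<xi> i * xs i v) \<in> subdiff (psi_norm \<psi>) x"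
  unfolding subdiff_psi_norm_iff
proof (intro conjI allI)
  have xs_i: "bounded_linear (xs i)" "xs i (x i) = norm (x i)" "\<bar>xs i v\<bar> \<le> norm v" for i v
    using xs norm_subdiff_abs_le[of "xs i" "x i" v] by (auto simp: norm_subdiff_iff)
  have \<xi>_eq: "(\<Sum>i\<in>UNIV. \<xi> i * norm (x i)) = psi_norm \<psi> (\<lambda>i. norm (x i))"
    and \<xi>_le: "\<And>s. (\<Sum>i\<in>UNIV. \<xi> i * s i) \<le> psi_norm \<psi> s"
    using \<xi> by (auto simp: subdiff_Rn_psi_norm_iff)
  show "bounded_linear (\<lambda>v. \<xi> i * xs i v)" for i
    using bounded_linear_compose[OF bounded_linear_mult_right xs_i(1)] .
  show "(\<Sum>i\<in>UNIV. \<xi> i * xs i (x i)) = psi_norm \<psi> x"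
    using \<xi>_eq by (simp add: xs_i(2) psi_norm_norms[of \<psi> x])
  fix y :: "'n \<Rightarrow> 'a"
  define s where "s i = (if 0 \<le> \<xi> i then norm (y i) else - norm (y i))" for i
  have "(\<Sum>i\<in>UNIV. \<xi> i * xs i (y i)) \<le> (\<Sum>i\<in>UNIV. \<xi> i * s i)"
  proof (rule sum_mono)
    fix i
    have "\<xi> i * xs i (y i) \<le> \<bar>\<xi> i\<bar> * \<bar>xs i (y i)\<bar>"
      by (metis abs_ge_self abs_mult)
    also have "\<dots> \<le> \<bar>\<xi> i\<bar> * norm (y i)"
      by (intro mult_left_mono xs_i(3)) simp
    also have "\<dots> = \<xi> i * s i"
      by (simp add: s_def)
    finally show "\<xi> i * xs i (y i) \<le> \<xi> i * s i" .
  qed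
  also have "\<dots> \<le> psi_norm \<psi> s"
    by (rule \<xi>_le)
  also have "\<dots> = psi_norm \<psi> y"
  proof -
    have "(\<lambda>i. norm (s i)) = (\<lambda>i. norm (y i))"
      by (simp add: s_def fun_eq_iff)
    then show ?thesis
      using psi_norm_norms[of \<psi> s] psi_norm_norms[of \<psi> y] by simp
  qed
  finally show "(\<Sum>i\<in>UNIV. \<xi> i * xs i (y i)) \<le> psi_norm \<psi> y" .
qed

lemma onorm_approx_unit_vector:
  fixes f :: "'a::real_normed_vector \<Rightarrow> real"
  assumes "bounded_linear f" and "(u::'a) \<noteq> 0" and "0 < e"
  obtains v where "norm v = 1" and "onorm f - e \<le> f v"
proof -
  have "bdd_above (range (\<lambda>w. norm (f w) / norm w))"
    by (rule bdd_aboveI2) (rule le_onorm[OF assms(1)])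
  moreover have "onorm f - e < (SUP w. norm (f w) / norm w)"
    using \<open>0 < e\<close> unfolding onorm_def by simp
  ultimately obtain w where w: "onorm f - e < norm (f w) / norm w"
    using less_cSUP_iff by blast
  have "\<exists>v. norm v = 1 \<and> onorm f - e < \<bar>f v\<bar>"
  proof (cases "w = 0")
    case True
    with w have "onorm f - e < 0" by simp
    then show ?thesis
      using \<open>u \<noteq> 0\<close> by (intro exI[of _ "u /\<^sub>R norm u"]) auto
  next
    case False
    have "\<bar>f (w /\<^sub>R norm w)\<bar> = norm (f w) / norm w"
      using linear_scale[OF bounded_linear.linear[OF assms(1)]]
      by (simp add: abs_mult divide_inverse_commute)
    with False w show ?thesis
      by (intro exI[of _ "w /\<^sub>R norm w"]) auto
  qed
  then obtain v where "norm v = 1" "onorm f - e < \<bar>f v\<bar>" by blast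
  moreover have "f (- v) = - f v"
    using linear_neg[OF bounded_linear.linear[OF assms(1)]] .
  ultimately show ?thesis
    using that[of v] that[of "- v"] by (cases "0 \<le> f v") auto
qed

lemma sum_onorm_le_psi_norm:
  fixes g :: "'n::finite \<Rightarrow> 'a::real_normed_vector \<Rightarrow> real" and u :: 'a
  assumes bl: "\<And>i. bounded_linear (g i)"
    and dominated: "\<And>y. (\<Sum>i\<in>UNIV. g i (y i)) \<le> psi_norm \<psi> y"
    and "u \<noteq> 0" and t: "\<And>i. 0 \<le> t i"
  shows "(\<Sum>i\<in>UNIV. onorm (g i) * t i) \<le> psi_norm \<psi> t"
proof (rule field_le_epsilon)
  fix e :: real
  assume "0 < e"
  define T where "T = (\<Sum>i\<in>UNIV. t i)"
  have "0 \<le> T" unfolding T_def using t by (simp add: sum_nonneg)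
  define d where "d = e / (T + 1)"
  have "0 < d" using \<open>0 < e\<close> \<open>0 \<le> T\<close> by (simp add: d_def)
  have "\<forall>i. \<exists>v. norm v = 1 \<and> onorm (g i) - d \<le> g i v"
  proof
    fix i
    obtain v where "norm v = 1" "onorm (g i) - d \<le> g i v"
      using onorm_approx_unit_vector[OF bl \<open>u \<noteq> 0\<close> \<open>0 < d\<close>] .
    then show "\<exists>v. norm v = 1 \<and> onorm (g i) - d \<le> g i v" by blast
  qed
  then obtain v where v: "\<And>i. norm (v i) = 1" "\<And>i. onorm (g i) - d \<le> g i (v i)"
    by (metis choice)
  have "(\<Sum>i\<in>UNIV. onorm (g i) * t i) - d * T = (\<Sum>i\<in>UNIV. t i * (onorm (g i) - d))"
    unfolding T_def by (simp add: sum_distrib_left sum_subtractf right_diff_distrib mult.commute)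
  also have "\<dots> \<le> (\<Sum>i\<in>UNIV. t i * g i (v i))"
    by (intro sum_mono mult_left_mono v(2) t)
  also have "\<dots> = (\<Sum>i\<in>UNIV. g i (t i *\<^sub>R v i))"
    by (simp add: linear_scale[OF bounded_linear.linear[OF bl]])
  also have "\<dots> \<le> psi_norm \<psi> (\<lambda>i. t i *\<^sub>R v i)"
    by (rule dominated)
  also have "\<dots> = psi_norm \<psi> t"
  proof -
    have "(\<lambda>i. norm (t i *\<^sub>R v i)) = t"
      using v(1) t by (simp add: fun_eq_iff)
    then show ?thesis
      using psi_norm_norms[of \<psi> "\<lambda>i. t i *\<^sub>R v i"] by simp
  qed
  finally have "(\<Sum>i\<in>UNIV. onorm (g i) * t i) \<le> psi_norm \<psi> t + d * T" by simp
  moreover have "d * T \<le> e"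
    using \<open>0 < e\<close> \<open>0 \<le> T\<close> by (simp add: d_def field_simps)
  ultimately show "(\<Sum>i\<in>UNIV. onorm (g i) * t i) \<le> psi_norm \<psi> t + e" by simp
qed

lemma norm_attaining_functional_eq_scaled_norm_subgradient:
  fixes f :: "'a::real_normed_vector \<Rightarrow> real"
  assumes bl: "bounded_linear f" and attained: "f x = onorm f * norm x"
  obtains h where "h \<in> norm_subdiff x" and "f = (\<lambda>v. onorm f * h v)"
proof (cases "onorm f = 0")
  case True
  obtain h where "h \<in> norm_subdiff x"
    using norm_subdiff_nonempty by blast
  moreover have "f = (\<lambda>v. 0)"
    using True onorm_eq_0[OF bl] by auto
  ultimately show ?thesis
    using that True by simp
next
  case False
  then have "0 < onorm f"
    using onorm_pos_le[OF bl] by simp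
  have bound: "\<bar>f v\<bar> \<le> onorm f * norm v" for v
    using onorm[OF bl] by simp
  have "(\<lambda>v. f v / onorm f) \<in> norm_subdiff x"
    unfolding norm_subdiff_iff
  proof (intro conjI allI)
    show "bounded_linear (\<lambda>v. f v / onorm f)"
      using bounded_linear_compose[OF bounded_linear_divide bl] by simp
    show "f x / onorm f = norm x"
      using attained \<open>0 < onorm f\<close> by simp
    show "f y / onorm f \<le> norm y" for y
      using bound[of y] \<open>0 < onorm f\<close> by (simp add: divide_le_eq mult.commute)
  qed
  moreover have "f = (\<lambda>v. onorm f * (f v / onorm f))"
    using False by simp
  ultimately show ?thesis
    using that by blast
qed

lemma subdiff_psi_norm_onorm:
  fixes x :: "'n::finite \<Rightarrow> 'a::real_normed_vector" and u :: 'a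
  assumes g: "g \<in> subdiff (psi_norm \<psi>) x" and "u \<noteq> 0"
  shows "(\<lambda>i. onorm (g i)) \<in> subdiff_Rn (psi_norm \<psi>) (\<lambda>i. norm (x i))"
    and "g i (x i) = onorm (g i) * norm (x i)"
proof -
  have bl: "\<And>i. bounded_linear (g i)"
    and g_x: "(\<Sum>i\<in>UNIV. g i (x i)) = psi_norm \<psi> x"
    and dominated: "\<And>y. (\<Sum>i\<in>UNIV. g i (y i)) \<le> psi_norm \<psi> y"
    using g by (auto simp: subdiff_psi_norm_iff)
  have onorm_le: "\<And>t. (\<forall>i. 0 \<le> t i) \<Longrightarrow> (\<Sum>i\<in>UNIV. onorm (g i) * t i) \<le> psi_norm \<psi> t"
    using sum_onorm_le_psi_norm[OF bl dominated \<open>u \<noteq> 0\<close>] by blast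
  have g_le: "g i (x i) \<le> onorm (g i) * norm (x i)" for i
    using onorm[OF bl, of i "x i"] by simp
  have "(\<Sum>i\<in>UNIV. onorm (g i) * norm (x i)) \<le> psi_norm \<psi> x"
    using onorm_le[of "\<lambda>i. norm (x i)"] psi_norm_norms[of \<psi> x] by simp
  then have "(\<Sum>i\<in>UNIV. g i (x i)) = (\<Sum>i\<in>UNIV. onorm (g i) * norm (x i))"
    using g_x sum_mono[of UNIV "\<lambda>i. g i (x i)", OF g_le] by linarith
  then show attained: "g i (x i) = onorm (g i) * norm (x i)" for i
    using sum_mono_inv[where f = "\<lambda>i. g i (x i)" and g = "\<lambda>i. onorm (g i) * norm (x i)"
        and I = UNIV] g_le
    by simp
  show "(\<lambda>i. onorm (g i)) \<in> subdiff_Rn (psi_norm \<psi>) (\<lambda>i. norm (x i))"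
    unfolding subdiff_Rn_psi_norm_iff
  proof (intro conjI allI)
    show "(\<Sum>i\<in>UNIV. onorm (g i) * norm (x i)) = psi_norm \<psi> (\<lambda>i. norm (x i))"
      using g_x attained psi_norm_norms[of \<psi> x] by simp
    fix s
    have "(\<Sum>i\<in>UNIV. onorm (g i) * s i) \<le> (\<Sum>i\<in>UNIV. onorm (g i) * \<bar>s i\<bar>)"
      by (intro sum_mono mult_left_mono onorm_pos_le[OF bl]) simp
    also have "\<dots> \<le> psi_norm \<psi> (\<lambda>i. \<bar>s i\<bar>)"
      by (rule onorm_le) simp
    also have "\<dots> = psi_norm \<psi> s"
      using psi_norm_norms[of \<psi> s] by simp
    finally show "(\<Sum>i\<in>UNIV. onorm (g i) * s i) \<le> psi_norm \<psi> s" .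
  qed
qed

lemma subdiff_psi_norm_decompose:
  fixes x :: "'n::finite \<Rightarrow> 'a::real_normed_vector" and u :: 'a
  assumes g: "g \<in> subdiff (psi_norm \<psi>) x" and "u \<noteq> 0"
  obtains xs \<xi> where "\<forall>i. xs i \<in> norm_subdiff (x i)"
    and "\<xi> \<in> subdiff_Rn (psi_norm \<psi>) (\<lambda>i. norm (x i))"
    and "g = (\<lambda>i v. \<xi> i * xs i v)"
proof -
  have bl: "\<And>i. bounded_linear (g i)"
    using g by (simp add: subdiff_psi_norm_iff)
  have "\<forall>i. \<exists>h. h \<in> norm_subdiff (x i) \<and> g i = (\<lambda>v. onorm (g i) * h v)"
  proof
    fix i
    obtain h where "h \<in> norm_subdiff (x i)" and "g i = (\<lambda>v. onorm (g i) * h v)"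
      using norm_attaining_functional_eq_scaled_norm_subgradient[OF bl
          subdiff_psi_norm_onorm(2)[OF g \<open>u \<noteq> 0\<close>]] .
    then show "\<exists>h. h \<in> norm_subdiff (x i) \<and> g i = (\<lambda>v. onorm (g i) * h v)" by blast
  qed
  then obtain xs where "\<forall>i. xs i \<in> norm_subdiff (x i) \<and> g i = (\<lambda>v. onorm (g i) * xs i v)"
    by (metis choice)
  then have "\<forall>i. xs i \<in> norm_subdiff (x i)" and "g = (\<lambda>i v. onorm (g i) * xs i v)"
    by (simp_all add: fun_eq_iff)
  then show ?thesis
    by (rule that[OF _ subdiff_psi_norm_onorm(1)[OF g \<open>u \<noteq> 0\<close>]])
qed

lemma subdiff_psi_norm_eq:
  fixes x :: "'n::finite \<Rightarrow> 'a::real_normed_vector" and u :: 'a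
  assumes "u \<noteq> 0"
  shows "subdiff (psi_norm \<psi>) x =
    {(\<lambda>i v. \<xi> i * xs i v) | xs \<xi>.
       (\<forall>i. xs i \<in> norm_subdiff (x i)) \<and> \<xi> \<in> subdiff_Rn (psi_norm \<psi>) (\<lambda>i. norm (x i))}"
    (is "_ = ?S")
proof (intro equalityI subsetI)
  fix g assume "g \<in> subdiff (psi_norm \<psi>) x"
  then obtain xs \<xi> where "\<forall>i. xs i \<in> norm_subdiff (x i)"
    and "\<xi> \<in> subdiff_Rn (psi_norm \<psi>) (\<lambda>i. norm (x i))" and "g = (\<lambda>i v. \<xi> i * xs i v)"
    using subdiff_psi_norm_decompose[OF _ assms] by blast
  then show "g \<in> ?S" by auto
next
  fix g assume "g \<in> ?S"
  then obtain xs \<xi> where "\<forall>i. xs i \<in> norm_subdiff (x i)"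
    and "\<xi> \<in> subdiff_Rn (psi_norm \<psi>) (\<lambda>i. norm (x i))" and "g = (\<lambda>i v. \<xi> i * xs i v)"
    by blast
  then show "g \<in> subdiff (psi_norm \<psi>) x"
    by (simp add: scaled_norm_subgradients_mem_subdiff_psi_norm)
qed

theorem theorem4p3:
  fixes \<psi> :: "('n::finite \<Rightarrow> real) \<Rightarrow> real"
    and x :: "'n \<Rightarrow> 'a::real_normed_vector"
  assumes "CARD('n) \<ge> 2"
    and "\<psi> \<in> Psi_class"
    and "psi_norm \<psi> x = 1"
  shows "subdiff (psi_norm \<psi>) x =
    {(\<lambda>i v. \<xi> i * xs i v) | xs \<xi>.
       (\<forall>i. xs i \<in> norm_subdiff (x i)) \<and>
       \<xi> \<in> subdiff_Rn (psi_norm \<psi>) (\<lambda>i. norm (x i))}"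
proof -
  have "x \<noteq> (\<lambda>_. 0)"
    using assms(3) by (auto simp: psi_norm_def)
  then obtain k where "x k \<noteq> 0" by auto
  then show ?thesis
    by (rule subdiff_psi_norm_eq)
qed

end
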